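(* Let $g \in L^2(\mathbb{R}^d)$ be an arbitrary real-valued window function. If $\mathcal{L} \subseteq \mathbb{R}^{2d}$ satisfies $\mathcal{L} \subseteq \Lambda \times \mathbb{R}^d$ for some lattice $\Lambda \subseteq \mathbb{R}^d$, then the set $$\mathcal{N}_{\mathbb{R}}(g,\mathcal{L}) = \{ f \in L^2(\mathbb{R}^d, \mathbb{R}) : \exists h \in L^2(\mathbb{R}^d, \mathbb{R}) \text{ with } h \nsim f \text{ and } |V_gf(z)| = |V_gh(z)|\ \forall z\in\mathcal{L} \}$$ contains an infinite-dimensional cone.
   Context: $V_gf(x,\omega)=\int_{\mathbb{R}^d} f(t)\overline{g(t-x)}e^{-2\pi i \omega\cdot t}\,dt$ is the short-time Fourier transform. $L^2(\mathbb{R}^d,\mathbb{R})$ denotes the real-valued functions in $L^2(\mathbb{R}^d)$. For functions $f,h$, $f\sim h$ means there is $\nu\in\mathbb{C}$, $|\nu|=1$, with $f=\nu h$; $f\nsim h$ means this fails. A lattice in $\mathbb{R}^d$ is $A\mathbb{Z}^d$ with $A\in\mathrm{GL}_d(\mathbb{R})$. A cone in a vector space $V$ is a set $C$ with $\kappa C\subseteq C$ for all $\kappa>0$; it is infinite-dimensional if not contained in any finite-dimensional subspace. *)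

theory Defs
  imports "HOL-Analysis.Analysis"
begin

definition L2R :: "(real^'d \<Rightarrow> real) set" where
  "L2R = {f. f \<in> borel_measurable lebesgue \<and> integrable lebesgue (\<lambda>t. (f t)^2)}"

definition stft :: "(real^'d \<Rightarrow> complex) \<Rightarrow> (real^'d \<Rightarrow> complex) \<Rightarrow> (real^'d) \<times> (real^'d) \<Rightarrow> complex" where
  "stft g f z = (LINT t|lebesgue. f t * cnj (g (t - fst z)) * cis (- (2 * pi * (snd z \<bullet> t))))"

definition phase_equiv :: "(real^'d \<Rightarrow> complex) \<Rightarrow> (real^'d \<Rightarrow> complex) \<Rightarrow> bool" where
  "phase_equiv f h \<longleftrightarrow> (\<exists>\<nu>. cmod \<nu> = 1 \<and> (AE t in lebesgue. f t = \<nu> * h t))"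

definition is_lattice :: "(real^'d) set \<Rightarrow> bool" where
  "is_lattice \<Lambda> \<longleftrightarrow> (\<exists>A :: real^'d^'d. invertible A \<and>
       \<Lambda> = (\<lambda>k. A *v k) ` {k. \<forall>i. k $ i \<in> \<int>})"

definition N_R :: "(real^'d \<Rightarrow> real) \<Rightarrow> ((real^'d) \<times> (real^'d)) set \<Rightarrow> (real^'d \<Rightarrow> real) set" where
  "N_R g L = {f \<in> L2R. \<exists>h \<in> L2R.
      \<not> phase_equiv (\<lambda>t. complex_of_real (f t)) (\<lambda>t. complex_of_real (h t)) \<and>
      (\<forall>z\<in>L. cmod (stft (\<lambda>t. complex_of_real (g t)) (\<lambda>t. complex_of_real (f t)) z)
             = cmod (stft (\<lambda>t. complex_of_real (g t)) (\<lambda>t. complex_of_real (h t)) z))}"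

definition is_cone_fun :: "('a \<Rightarrow> real) set \<Rightarrow> bool" where
  "is_cone_fun C \<longleftrightarrow> (\<forall>f\<in>C. \<forall>\<kappa>::real. \<kappa> > 0 \<longrightarrow> (\<lambda>t. \<kappa> * f t) \<in> C)"

definition inf_dim_L2 :: "(real^'d \<Rightarrow> real) set \<Rightarrow> bool" where
  "inf_dim_L2 C \<longleftrightarrow> \<not> (\<exists>B. finite B \<and>
     (\<forall>f\<in>C. \<exists>c :: (real^'d \<Rightarrow> real) \<Rightarrow> real. AE t in lebesgue. f t = (\<Sum>b\<in>B. c b * b t)))"

end

theory Submission
  imports Defs
begin

(*
  Choose l with l . p an integer for every lattice point p (a row of the inverse of the
  lattice matrix), and let w t = 1 + frac (l . t).  Then w is Lambda-periodic, takes values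
  in [1, 2), and w (-t) \<noteq> w t off the null set of hyperplanes where 2 (l . t) is an
  integer.  For phi t = g (-t) and a Lambda-periodic a, the substitution t = p - s shows
  that phi * a and phi * a(-.) have STFTs of equal modulus at every (p, omega) with p in
  Lambda.  Taking a = kappa w^n with n \<ge> 1 gives a cone of such f, and f is not a
  unimodular multiple of its partner since |w t| \<noteq> |w (-t)| on the support of phi.
  The cone is infinite-dimensional: a linear relation among phi w, ..., phi w^N would give
  phi P(w) = 0 a.e. for a nonzero polynomial P, but w avoids the finitely many roots of P
  almost everywhere.  If g vanishes a.e., the STFT vanishes identically and the indicator
  of the unit cube can play the role of phi.
*)

lemma
  fixes a :: "'a::euclidean_space"
  shows distr_lebesgue_reflect: "distr lebesgue lebesgue (\<lambda>x. a - x) = lebesgue"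
    and measurable_lebesgue_reflect: "(\<lambda>x. a - x) \<in> lebesgue \<rightarrow>\<^sub>M lebesgue"
proof -
  have eq: "(\<lambda>x. a + (\<Sum>j\<in>Basis. ((-1) * (x \<bullet> j)) *\<^sub>R j)) = (\<lambda>x::'a. a - x)"
  proof
    fix x :: 'a
    have "(\<Sum>j\<in>Basis. ((-1) * (x \<bullet> j)) *\<^sub>R j) = - (\<Sum>j\<in>Basis. (x \<bullet> j) *\<^sub>R j)"
      by (simp add: sum_negf[symmetric])
    then show "a + (\<Sum>j\<in>Basis. ((-1) * (x \<bullet> j)) *\<^sub>R j) = a - x"
      by (simp add: euclidean_representation)
  qed
  have "lebesgue = density (distr lebesgue lebesgue (\<lambda>x. a - x))
      (\<lambda>_. (\<Prod>j\<in>(Basis::'a set). \<bar>-1::real\<bar>))"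
    unfolding eq[symmetric] by (rule lebesgue_affine_euclidean) simp
  then show "distr lebesgue lebesgue (\<lambda>x. a - x) = lebesgue"
    by (simp add: density_1)
  show "(\<lambda>x. a - x) \<in> lebesgue \<rightarrow>\<^sub>M lebesgue"
    unfolding eq[symmetric] by (rule lebesgue_affine_measurable) simp
qed

lemma integral_lebesgue_reflect:
  fixes F :: "'a::euclidean_space \<Rightarrow> 'b::{banach, second_countable_topology}"
  assumes "F \<in> borel_measurable lebesgue"
  shows "integral\<^sup>L lebesgue F = (LINT x|lebesgue. F (a - x))"
  using integral_distr[OF measurable_lebesgue_reflect assms, of a]
  by (simp add: distr_lebesgue_reflect)

lemma null_sets_lebesgue_reflect:
  fixes S :: "'a::euclidean_space set"
  assumes "S \<in> null_sets lebesgue"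
  shows "{x. a - x \<in> S} \<in> null_sets lebesgue"
  using assms null_sets_distr_iff[OF measurable_lebesgue_reflect[of a], of S]
  by (simp add: distr_lebesgue_reflect vimage_def null_setsD2)

lemma AE_lebesgue_reflect:
  fixes a :: "'a::euclidean_space"
  assumes "AE x in lebesgue. P x"
  shows "AE x in lebesgue. P (a - x)"
proof -
  from assms obtain N where N: "{x. \<not> P x} \<subseteq> N" "N \<in> null_sets lebesgue"
    unfolding eventually_ae_filter by auto
  from null_sets_lebesgue_reflect[OF N(2)] show ?thesis
    by (rule AE_I') (use N(1) in auto)
qed

lemma
  fixes f :: "'a::euclidean_space \<Rightarrow> 'b::euclidean_space"
  assumes "f \<in> borel_measurable lebesgue"
  shows borel_measurable_lebesgue_uminus: "(\<lambda>x. f (- x)) \<in> borel_measurable lebesgue"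
    and borel_measurable_lebesgue_translate: "(\<lambda>x. f (x - a)) \<in> borel_measurable lebesgue"
  using borel_measurable_affine[OF assms, of "-1" 0] borel_measurable_affine[OF assms, of 1 "-a"]
  by simp_all

lemma L2R_uminus:
  assumes "f \<in> L2R"
  shows "(\<lambda>t. f (- t)) \<in> L2R"
proof -
  have f: "f \<in> borel_measurable lebesgue" "integrable lebesgue (\<lambda>t. (f t)\<^sup>2)"
    using assms by (auto simp: L2R_def)
  then have "(\<lambda>t. (f t)\<^sup>2) \<in> borel_measurable lebesgue" by measurable
  from integrable_distr_eq[OF measurable_lebesgue_reflect this, of 0] f(2)
  have "integrable lebesgue (\<lambda>t. (f (0 - t))\<^sup>2)"
    unfolding distr_lebesgue_reflect by blast
  then show ?thesis
    using borel_measurable_lebesgue_uminus[OF f(1)] by (simp add: L2R_def)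
qed

lemma L2R_mult_bounded:
  assumes "f \<in> L2R" and b: "b \<in> borel_measurable lebesgue" "\<And>t. \<bar>b t\<bar> \<le> M"
  shows "(\<lambda>t. f t * b t) \<in> L2R"
proof -
  have f: "f \<in> borel_measurable lebesgue" "integrable lebesgue (\<lambda>t. (f t)\<^sup>2)"
    using assms by (auto simp: L2R_def)
  have bound: "(f t * b t)\<^sup>2 \<le> M\<^sup>2 * (f t)\<^sup>2" for t
  proof -
    have "(b t)\<^sup>2 \<le> M\<^sup>2"
      using power_mono[OF b(2)[of t] abs_ge_zero, of 2] by simp
    from mult_right_mono[OF this zero_le_power2[of "f t"]] show ?thesis
      by (simp only: power_mult_distrib mult.commute)
  qed
  have "integrable lebesgue (\<lambda>t. (f t * b t)\<^sup>2)"
  proof (rule Bochner_Integration.integrable_bound)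
    show "integrable lebesgue (\<lambda>t. M\<^sup>2 * (f t)\<^sup>2)" using f(2) by simp
    show "(\<lambda>t. (f t * b t)\<^sup>2) \<in> borel_measurable lebesgue" using f(1) b(1) by measurable
    show "AE t in lebesgue. norm ((f t * b t)\<^sup>2) \<le> norm (M\<^sup>2 * (f t)\<^sup>2)"
      using bound by simp
  qed
  then show ?thesis
    using f(1) b(1) by (simp add: L2R_def)
qed

lemma indicator_unit_cube_L2R: "indicator (cbox 0 One) \<in> (L2R :: (real^'d \<Rightarrow> real) set)"
proof -
  have cube: "cbox 0 (One::real^'d) \<in> sets lebesgue" by simp
  have "integrable lebesgue (indicator (cbox 0 (One::real^'d)) :: _ \<Rightarrow> real)"
    by (rule integrable_real_indicator[OF cube]) (simp add: emeasure_lborel_cbox_finite)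
  moreover have "(\<lambda>t. (indicator (cbox 0 One) t)\<^sup>2)
      = (indicator (cbox 0 (One::real^'d)) :: _ \<Rightarrow> real)"
    by (auto simp: indicator_def)
  ultimately show ?thesis
    using borel_measurable_indicator[OF cube] by (simp add: L2R_def)
qed

lemma indicator_unit_cube_not_AE_zero:
  "\<not> (AE t in lebesgue. indicator (cbox 0 (One::'a::euclidean_space)) t = (0::real))"
proof -
  have "cbox 0 (One::'a) \<notin> null_sets lebesgue"
    using negligible_interval(1)[of "0::'a" One] box01_nonempty
    by (simp add: negligible_iff_null_sets)
  then show ?thesis
    using AE_iff_null_sets[of "cbox 0 (One::'a)" lebesgue] by (simp add: indicator_eq_0_iff)
qed

lemma lattice_dual_functional:
  assumes "is_lattice \<Lambda>"
  obtains l :: "real^'d" where "l \<noteq> 0" "\<And>p. p \<in> \<Lambda> \<Longrightarrow> l \<bullet> p \<in> \<int>"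
proof -
  obtain A :: "real^'d^'d"
    where "invertible A" and \<Lambda>: "\<Lambda> = (\<lambda>k. A *v k) ` {k. \<forall>i. k $ i \<in> \<int>}"
    using assms unfolding is_lattice_def by blast
  then obtain A' where A': "A' ** A = mat 1" unfolding invertible_def by blast
  obtain i :: 'd where True by blast
  have row: "A' $ i \<bullet> (A *v k) = k $ i" for k
    by (simp add: matrix_vector_mul_component[symmetric] matrix_vector_mul_assoc A')
  show thesis
  proof
    show "A' $ i \<noteq> 0"
      using row[of "axis i 1"] by (auto simp: axis_def)
    show "A' $ i \<bullet> p \<in> \<int>" if "p \<in> \<Lambda>" for p
      using that row unfolding \<Lambda> by auto
  qed
qed

definition sawtooth :: "'a::real_inner \<Rightarrow> 'a \<Rightarrow> real" where
  "sawtooth l t = 1 + frac (l \<bullet> t)"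

lemma sawtooth_bounds: "1 \<le> sawtooth l t" "sawtooth l t < 2"
  using frac_ge_0[of "l \<bullet> t"] frac_lt_1[of "l \<bullet> t"] by (auto simp: sawtooth_def)

lemma sawtooth_uminus: "sawtooth l (- t) = sawtooth (- l) t"
  by (simp add: sawtooth_def)

lemma sawtooth_periodic:
  assumes "l \<bullet> p \<in> \<int>"
  shows "sawtooth l (t - p) = sawtooth l t"
proof -
  obtain k where "l \<bullet> p = of_int k" using assms by (auto elim: Ints_cases)
  then have "l \<bullet> (t - p) = l \<bullet> t + of_int (- k)" by (simp add: inner_diff_right)
  then show ?thesis
    by (simp only: sawtooth_def frac_add_of_int_right)
qed

lemma borel_measurable_sawtooth:
  "sawtooth l \<in> borel_measurable (lebesgue :: 'a::euclidean_space measure)"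
  unfolding sawtooth_def frac_def by (intro measurable_completion) measurable

lemma AE_inner_notin:
  fixes l :: "'a::euclidean_space"
  assumes "l \<noteq> 0" "countable S"
  shows "AE t in lebesgue. l \<bullet> t \<notin> S"
proof -
  have "{t. l \<bullet> t \<in> S} = (\<Union>s\<in>S. {t. l \<bullet> t = s})" by auto
  also have "\<dots> \<in> null_sets lebesgue"
    using assms
    by (intro null_sets_UN') (auto simp: negligible_iff_null_sets[symmetric] intro!: negligible_hyperplane)
  finally show ?thesis
    using AE_not_in by force
qed

lemma AE_sawtooth_notin:
  fixes l :: "'a::euclidean_space"
  assumes "l \<noteq> 0" "countable R"
  shows "AE t in lebesgue. sawtooth l t \<notin> R"
proof -
  have "countable ((\<lambda>(r, k). r - 1 + real_of_int k) ` (R \<times> UNIV))"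
    using assms(2) by (intro countable_image countable_SIGMA) auto
  from AE_inner_notin[OF assms(1) this] show ?thesis
  proof (rule AE_mp, intro AE_I2 impI notI)
    fix t assume "sawtooth l t \<in> R" and "l \<bullet> t \<notin> (\<lambda>(r, k). r - 1 + real_of_int k) ` (R \<times> UNIV)"
    moreover have "l \<bullet> t = sawtooth l t - 1 + real_of_int \<lfloor>l \<bullet> t\<rfloor>"
      by (simp add: sawtooth_def frac_def)
    ultimately show False
      using image_eqI[of "l \<bullet> t" "\<lambda>(r, k). r - 1 + real_of_int k" "(sawtooth l t, \<lfloor>l \<bullet> t\<rfloor>)"]
      by auto
  qed
qed

lemma frac_uminus_eq_imp_half_integer:
  assumes "frac (- x) = frac x"
  shows "2 * x \<in> \<int>"
proof (cases "x \<in> \<int>")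
  case False
  with assms have "frac x = 1/2" by (simp add: frac_neg)
  then have "2 * x = of_int (2 * \<lfloor>x\<rfloor> + 1)" by (simp add: frac_def algebra_simps)
  then show ?thesis by simp
qed simp

lemma AE_sawtooth_uminus_neq:
  fixes l :: "'a::euclidean_space"
  assumes "l \<noteq> 0"
  shows "AE t in lebesgue. sawtooth l (- t) \<noteq> sawtooth l t"
proof -
  have "countable {x::real. 2 * x \<in> \<int>}"
  proof (rule countable_subset)
    show "{x::real. 2 * x \<in> \<int>} \<subseteq> (\<lambda>k. of_int k / 2) ` UNIV"
    proof
      fix x :: real assume "x \<in> {x. 2 * x \<in> \<int>}"
      then obtain k where "2 * x = of_int k" by (auto elim: Ints_cases)
      then show "x \<in> (\<lambda>k. of_int k / 2) ` UNIV"
        by (intro image_eqI[of _ _ k]) auto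
    qed
  qed simp
  from AE_inner_notin[OF assms this] show ?thesis
    by (rule AE_mp) (auto simp: sawtooth_def intro!: AE_I2 dest: frac_uminus_eq_imp_half_integer)
qed

lemma underdetermined_homogeneous_system_nontrivial_solution:
  fixes v :: "'k \<Rightarrow> 'i \<Rightarrow> real"
  assumes "finite K" "finite I" "card K < card I"
  shows "\<exists>a. (\<exists>i\<in>I. a i \<noteq> 0) \<and> (\<forall>k\<in>K. (\<Sum>i\<in>I. a i * v k i) = 0)"
  using assms
proof (induction K arbitrary: I v rule: finite_induct)
  case empty
  then obtain i where "i \<in> I" by fastforce
  then show ?case by (intro exI[of _ "\<lambda>_. 1"]) auto
next
  case (insert k K)
  show ?case
  proof (cases "\<forall>i\<in>I. v k i = 0")
    case True
    with insert show ?thesis by fastforce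
  next
    case False
    then obtain i0 where i0: "i0 \<in> I" "v k i0 \<noteq> 0" by auto
    define I' where "I' = I - {i0}"
    \<comment> \<open>Gaussian elimination of the unknown \<open>i0\<close> by means of equation \<open>k\<close>\<close>
    define v' where "v' k' i = v k' i - v k' i0 * v k i / v k i0" for k' i
    have "card K < card I'" using insert i0 by (simp add: I'_def)
    with insert.IH[of I' v'] insert.prems obtain a' where
      a': "\<exists>i\<in>I'. a' i \<noteq> 0" "\<forall>k'\<in>K. (\<Sum>i\<in>I'. a' i * v' k' i) = 0"
      by (auto simp: I'_def)
    define a where "a i = (if i = i0 then - (\<Sum>j\<in>I'. a' j * v k j) / v k i0 else a' i)" for i
    have split: "(\<Sum>i\<in>I. a i * u i) = a i0 * u i0 + (\<Sum>i\<in>I'. a' i * u i)" for u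
    proof -
      have "(\<Sum>i\<in>I. a i * u i) = a i0 * u i0 + (\<Sum>i\<in>I'. a i * u i)"
        using i0 insert.prems by (simp add: I'_def sum.remove)
      also have "(\<Sum>i\<in>I'. a i * u i) = (\<Sum>i\<in>I'. a' i * u i)"
        by (rule sum.cong) (auto simp: a_def I'_def)
      finally show ?thesis .
    qed
    show ?thesis
    proof (intro exI[of _ a] conjI ballI)
      from a'(1) show "\<exists>i\<in>I. a i \<noteq> 0" by (auto simp: a_def I'_def)
    next
      fix k' assume k': "k' \<in> insert k K"
      show "(\<Sum>i\<in>I. a i * v k' i) = 0"
      proof (cases "k' = k")
        case True
        then show ?thesis
          unfolding split[of "v k'"] using i0 by (simp add: a_def)
      next
        case False
        with k' a'(2) have "(\<Sum>i\<in>I'. a' i * v' k' i) = 0" by auto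
        moreover have "(\<Sum>i\<in>I'. a' i * v' k' i)
            = (\<Sum>i\<in>I'. a' i * v k' i) - (v k' i0 / v k i0) * (\<Sum>i\<in>I'. a' i * v k i)"
          by (simp add: v'_def sum_subtractf sum_distrib_left algebra_simps)
        ultimately show ?thesis
          unfolding split[of "v k'"] by (simp add: a_def)
      qed
    qed
  qed
qed

lemma finite_roots_sum_powers:
  fixes a :: "nat \<Rightarrow> real"
  assumes "finite I" "\<exists>i\<in>I. a i \<noteq> 0"
  shows "finite {x. (\<Sum>i\<in>I. a i * x ^ i) = 0}"
proof -
  define c where "c i = (if i \<in> I then a i else 0)" for i
  have "(\<Sum>i\<in>I. a i * x ^ i) = (\<Sum>i\<le>Max I. c i * x ^ i)" for x :: real
    using assms(1) by (intro sum.mono_neutral_cong_left) (auto simp: c_def)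
  moreover have "\<exists>i\<le>Max I. c i \<noteq> 0"
    using assms by (auto simp: c_def)
  ultimately show ?thesis
    using polyfun_rootbound_finite[of "Max I" c] by simp
qed

lemma stft_vanishing_window:
  assumes "AE t in lebesgue. g (- t) = 0"
  shows "stft g f z = 0"
proof -
  from AE_lebesgue_reflect[OF assms, of "fst z"]
  have "AE t in lebesgue. f t * cnj (g (t - fst z)) * cis (- (2 * pi * (snd z \<bullet> t))) = 0"
    by (rule AE_mp) (auto intro: AE_I2)
  then show ?thesis
    unfolding stft_def by (rule integral_eq_zero_AE)
qed

definition stft_reflection_symmetric :: "(real^'d \<Rightarrow> real) \<Rightarrow> (real^'d \<Rightarrow> real) \<Rightarrow> bool" where
  "stft_reflection_symmetric g \<phi> \<longleftrightarrow>
    (\<forall>a z. a \<in> borel_measurable lebesgue \<longrightarrow> (\<forall>s. a (s - fst z) = a s) \<longrightarrow>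
      cmod (stft (\<lambda>t. complex_of_real (g t)) (\<lambda>t. complex_of_real (\<phi> t * a t)) z)
    = cmod (stft (\<lambda>t. complex_of_real (g t)) (\<lambda>t. complex_of_real (\<phi> t * a (- t))) z))"

lemma stft_reflection_symmetric_vanishing_window:
  assumes "AE t in lebesgue. g (- t) = 0"
  shows "stft_reflection_symmetric g \<phi>"
  using assms by (simp add: stft_reflection_symmetric_def stft_vanishing_window)

lemma stft_reflection_symmetric_reflected_window:
  fixes g :: "real^'d \<Rightarrow> real"
  assumes "g \<in> borel_measurable lebesgue"
  shows "stft_reflection_symmetric g (\<lambda>t. g (- t))"
  unfolding stft_reflection_symmetric_def
proof (intro allI impI)
  fix a :: "real^'d \<Rightarrow> real" and z :: "(real^'d) \<times> (real^'d)"
  assume a_meas: "a \<in> borel_measurable lebesgue" and periodic: "\<forall>s. a (s - fst z) = a s"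
  obtain p \<omega> where z: "z = (p, \<omega>)" by fastforce
  define F where "F b t = complex_of_real (g (- t) * b t) * cnj (complex_of_real (g (t - p)))
    * cis (- (2 * pi * (\<omega> \<bullet> t)))" for b t
  have [measurable]: "(\<lambda>t. g (- t)) \<in> borel_measurable lebesgue"
    "(\<lambda>t. a (- t)) \<in> borel_measurable lebesgue" "(\<lambda>t. g (t - p)) \<in> borel_measurable lebesgue"
    using assms a_meas
    by (auto intro: borel_measurable_lebesgue_uminus borel_measurable_lebesgue_translate)
  have [measurable]: "(\<lambda>t. cis (- (2 * pi * (\<omega> \<bullet> t)))) \<in> borel_measurable lebesgue"
    unfolding cis_conv_exp by (intro measurable_completion) measurable
  have "F (\<lambda>t. a (- t)) \<in> borel_measurable lebesgue"
    unfolding F_def complex_cnj_complex_of_real by measurable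
  \<comment> \<open>the substitution \<open>t = p - s\<close> turns one integrand into the conjugate of the other,
    up to a unimodular factor\<close>
  moreover have "F (\<lambda>t. a (- t)) (p - s) = cis (- (2 * pi * (\<omega> \<bullet> p))) * cnj (F a s)" for s
  proof -
    have "a (- (p - s)) = a s" using periodic by (simp add: z)
    moreover have "cis (- (2 * pi * (\<omega> \<bullet> (p - s))))
        = cis (- (2 * pi * (\<omega> \<bullet> p))) * cis (2 * pi * (\<omega> \<bullet> s))"
      by (simp add: inner_diff_right cis_mult algebra_simps)
    ultimately show ?thesis
      unfolding F_def by (simp add: algebra_simps cis_cnj)
  qed
  ultimately have "integral\<^sup>L lebesgue (F (\<lambda>t. a (- t)))
      = cis (- (2 * pi * (\<omega> \<bullet> p))) * cnj (integral\<^sup>L lebesgue (F a))"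
    by (simp add: integral_lebesgue_reflect[of _ p])
  then have "cmod (integral\<^sup>L lebesgue (F (\<lambda>t. a (- t)))) = cmod (integral\<^sup>L lebesgue (F a))"
    by (simp add: norm_mult)
  then show "cmod (stft (\<lambda>t. complex_of_real (g t)) (\<lambda>t. complex_of_real (g (- t) * a t)) z)
    = cmod (stft (\<lambda>t. complex_of_real (g t)) (\<lambda>t. complex_of_real (g (- t) * a (- t))) z)"
    unfolding stft_def F_def z by simp
qed

definition sawtooth_cone :: "('a::real_inner \<Rightarrow> real) \<Rightarrow> 'a \<Rightarrow> ('a \<Rightarrow> real) set" where
  "sawtooth_cone \<phi> l = {(\<lambda>t. \<phi> t * (\<kappa> * sawtooth l t ^ n)) | \<kappa> n. \<kappa> > 0 \<and> n \<ge> 1}"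

lemma is_cone_fun_sawtooth_cone: "is_cone_fun (sawtooth_cone \<phi> l)"
  unfolding is_cone_fun_def
proof (intro ballI allI impI)
  fix f and c :: real
  assume "f \<in> sawtooth_cone \<phi> l" "c > 0"
  then obtain \<kappa> n where "\<kappa> > 0" "n \<ge> 1" and f: "f = (\<lambda>t. \<phi> t * (\<kappa> * sawtooth l t ^ n))"
    unfolding sawtooth_cone_def by blast
  then have "(\<lambda>t. c * f t) = (\<lambda>t. \<phi> t * ((c * \<kappa>) * sawtooth l t ^ n))"
    by (simp add: algebra_simps)
  with \<open>c > 0\<close> \<open>\<kappa> > 0\<close> \<open>n \<ge> 1\<close> show "(\<lambda>t. c * f t) \<in> sawtooth_cone \<phi> l"
    unfolding sawtooth_cone_def by (intro CollectI exI[of _ "c * \<kappa>"] exI[of _ n]) simp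
qed

lemma not_phase_equiv_sawtooth_uminus:
  fixes \<phi> :: "real^'d \<Rightarrow> real"
  assumes "\<not> (AE t in lebesgue. \<phi> t = 0)" "l \<noteq> 0" "\<kappa> \<noteq> 0" "n \<ge> 1"
  shows "\<not> phase_equiv (\<lambda>t. complex_of_real (\<phi> t * (\<kappa> * sawtooth l t ^ n)))
                       (\<lambda>t. complex_of_real (\<phi> t * (\<kappa> * sawtooth l (- t) ^ n)))"
proof
  assume "phase_equiv (\<lambda>t. complex_of_real (\<phi> t * (\<kappa> * sawtooth l t ^ n)))
                      (\<lambda>t. complex_of_real (\<phi> t * (\<kappa> * sawtooth l (- t) ^ n)))"
  then obtain \<nu> where \<nu>: "cmod \<nu> = 1" and ae: "AE t in lebesgue.
      complex_of_real (\<phi> t * (\<kappa> * sawtooth l t ^ n)) = \<nu> * complex_of_real (\<phi> t * (\<kappa> * sawtooth l (- t) ^ n))"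
    unfolding phase_equiv_def by blast
  have reflect_eq: "sawtooth l t = sawtooth l (- t)"
    if "\<phi> t \<noteq> 0" and
      eq: "complex_of_real (\<phi> t * (\<kappa> * sawtooth l t ^ n)) = \<nu> * complex_of_real (\<phi> t * (\<kappa> * sawtooth l (- t) ^ n))"
    for t
  proof -
    have pos: "0 \<le> sawtooth l t" "0 \<le> sawtooth l (- t)"
      using sawtooth_bounds(1)[of l t] sawtooth_bounds(1)[of l "- t"] by auto
    from arg_cong[OF eq, of cmod] \<nu>
    have "\<bar>\<phi> t * (\<kappa> * sawtooth l t ^ n)\<bar> = \<bar>\<phi> t * (\<kappa> * sawtooth l (- t) ^ n)\<bar>"
      by (simp only: norm_mult mult_1 norm_of_real)
    with \<open>\<phi> t \<noteq> 0\<close> assms(3) pos have "sawtooth l t ^ n = sawtooth l (- t) ^ n"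
      by (simp add: abs_mult)
    then show ?thesis
      by (rule power_eq_imp_eq_base[OF _ pos]) (use assms(4) in simp)
  qed
  from ae have "AE t in lebesgue. \<phi> t \<noteq> 0 \<longrightarrow> sawtooth l t = sawtooth l (- t)"
    by (rule AE_mp) (auto intro!: AE_I2 reflect_eq)
  with AE_sawtooth_uminus_neq[OF assms(2)] have "AE t in lebesgue. \<phi> t = 0"
    by eventually_elim auto
  with assms(1) show False ..
qed

lemma inf_dim_L2_sawtooth_cone:
  fixes \<phi> :: "real^'d \<Rightarrow> real"
  assumes "\<not> (AE t in lebesgue. \<phi> t = 0)" "l \<noteq> 0"
  shows "inf_dim_L2 (sawtooth_cone \<phi> l)"
  unfolding inf_dim_L2_def
proof
  assume "\<exists>B. finite B \<and> (\<forall>f\<in>sawtooth_cone \<phi> l. \<exists>c. AE t in lebesgue. f t = (\<Sum>b\<in>B. c b * b t))"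
  then obtain B where "finite B"
    and span: "\<forall>f\<in>sawtooth_cone \<phi> l. \<exists>c. AE t in lebesgue. f t = (\<Sum>b\<in>B. c b * b t)"
    by blast
  define I where "I = {1..card B + 1}"
  have "\<forall>n\<in>I. \<exists>c. AE t in lebesgue. \<phi> t * sawtooth l t ^ n = (\<Sum>b\<in>B. c b * b t)"
  proof
    fix n assume "n \<in> I"
    then have "(\<lambda>t. \<phi> t * (1 * sawtooth l t ^ n)) \<in> sawtooth_cone \<phi> l"
      unfolding sawtooth_cone_def I_def by (intro CollectI exI[of _ 1] exI[of _ n]) simp
    from bspec[OF span this]
    show "\<exists>c. AE t in lebesgue. \<phi> t * sawtooth l t ^ n = (\<Sum>b\<in>B. c b * b t)"
      by simp
  qed
  from bchoice[OF this] obtain c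
    where "\<forall>n\<in>I. AE t in lebesgue. \<phi> t * sawtooth l t ^ n = (\<Sum>b\<in>B. c n b * b t)"
    by blast
  then have coords: "AE t in lebesgue. \<forall>n\<in>I. \<phi> t * sawtooth l t ^ n = (\<Sum>b\<in>B. c n b * b t)"
    by (subst AE_finite_all) (auto simp: I_def)
  \<comment> \<open>\<open>card B + 1\<close> coordinate vectors indexed by \<open>B\<close> are linearly dependent\<close>
  have "finite I" "card B < card I"
    by (simp_all add: I_def)
  then obtain a where a: "\<exists>n\<in>I. a n \<noteq> 0" "\<forall>b\<in>B. (\<Sum>n\<in>I. a n * c n b) = 0"
    using underdetermined_homogeneous_system_nontrivial_solution[OF \<open>finite B\<close>, of I "\<lambda>b n. c n b"]
    by blast
  define R where "R = {x. (\<Sum>n\<in>I. a n * x ^ n) = 0}"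
  have "countable R"
    unfolding R_def using \<open>finite I\<close> a(1) by (intro countable_finite finite_roots_sum_powers)
  from coords AE_sawtooth_notin[OF assms(2) this] have "AE t in lebesgue. \<phi> t = 0"
  proof eventually_elim
    case (elim t)
    have "\<phi> t * (\<Sum>n\<in>I. a n * sawtooth l t ^ n) = (\<Sum>n\<in>I. a n * (\<phi> t * sawtooth l t ^ n))"
      by (simp add: sum_distrib_left algebra_simps)
    also have "\<dots> = (\<Sum>n\<in>I. a n * (\<Sum>b\<in>B. c n b * b t))"
      using elim(1) by simp
    also have "\<dots> = (\<Sum>b\<in>B. (\<Sum>n\<in>I. a n * c n b) * b t)"
      by (simp add: sum_distrib_left sum_distrib_right algebra_simps sum.swap[of _ I B])
    also have "\<dots> = 0"
      using a(2) by simp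
    finally show "\<phi> t = 0"
      using elim(2) by (auto simp: R_def)
  qed
  with assms(1) show False ..
qed

lemma sawtooth_cone_subset_N_R:
  fixes \<phi> g :: "real^'d \<Rightarrow> real"
  assumes "\<phi> \<in> L2R" "\<not> (AE t in lebesgue. \<phi> t = 0)" "l \<noteq> 0"
    and periods: "\<And>z. z \<in> L \<Longrightarrow> l \<bullet> fst z \<in> \<int>"
    and "stft_reflection_symmetric g \<phi>"
  shows "sawtooth_cone \<phi> l \<subseteq> N_R g L"
proof
  fix f assume "f \<in> sawtooth_cone \<phi> l"
  then obtain \<kappa> n where "\<kappa> > 0" "n \<ge> 1" and f: "f = (\<lambda>t. \<phi> t * (\<kappa> * sawtooth l t ^ n))"
    unfolding sawtooth_cone_def by blast
  define a where "a t = \<kappa> * sawtooth l t ^ n" for t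
  have a_meas: "a \<in> borel_measurable lebesgue" "(\<lambda>t. a (- t)) \<in> borel_measurable lebesgue"
    unfolding a_def sawtooth_uminus using borel_measurable_sawtooth by measurable
  have a_bound: "\<bar>a t\<bar> \<le> \<kappa> * 2 ^ n" for t
    using \<open>\<kappa> > 0\<close> sawtooth_bounds[of l t] power_mono[of "sawtooth l t" 2 n]
    by (simp add: a_def abs_mult)
  have "(\<lambda>t. \<phi> t * a t) \<in> L2R" "(\<lambda>t. \<phi> t * a (- t)) \<in> L2R"
    using L2R_mult_bounded[OF assms(1) a_meas(1) a_bound]
      L2R_mult_bounded[OF assms(1) a_meas(2) a_bound] by auto
  moreover have "\<not> phase_equiv (\<lambda>t. complex_of_real (\<phi> t * a t)) (\<lambda>t. complex_of_real (\<phi> t * a (- t)))"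
    using not_phase_equiv_sawtooth_uminus[OF assms(2,3) _ \<open>n \<ge> 1\<close>, of \<kappa>] \<open>\<kappa> > 0\<close>
    by (simp add: a_def)
  moreover have "cmod (stft (\<lambda>t. complex_of_real (g t)) (\<lambda>t. complex_of_real (\<phi> t * a t)) z)
      = cmod (stft (\<lambda>t. complex_of_real (g t)) (\<lambda>t. complex_of_real (\<phi> t * a (- t))) z)"
    if "z \<in> L" for z
  proof -
    have "\<forall>s. a (s - fst z) = a s"
      using sawtooth_periodic[OF periods[OF that]] by (simp add: a_def)
    with assms(5) a_meas(1) show ?thesis
      unfolding stft_reflection_symmetric_def by blast
  qed
  moreover have "f = (\<lambda>t. \<phi> t * a t)"
    by (simp add: f a_def)
  ultimately show "f \<in> N_R g L"
    unfolding N_R_def by (intro CollectI conjI bexI[of _ "\<lambda>t. \<phi> t * a (- t)"] ballI) simp_all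
qed

theorem theorem1p7:
  fixes g :: "real^'d \<Rightarrow> real"
    and L :: "((real^'d) \<times> (real^'d)) set"
    and \<Lambda> :: "(real^'d) set"
  assumes "g \<in> L2R"
    and "is_lattice \<Lambda>"
    and "L \<subseteq> \<Lambda> \<times> UNIV"
  shows "\<exists>C. is_cone_fun C \<and> inf_dim_L2 C \<and> C \<subseteq> N_R g L"
proof -
  obtain l :: "real^'d" where l: "l \<noteq> 0" "\<And>p. p \<in> \<Lambda> \<Longrightarrow> l \<bullet> p \<in> \<int>"
    using lattice_dual_functional[OF assms(2)] by blast
  with assms(3) have periods: "\<And>z. z \<in> L \<Longrightarrow> l \<bullet> fst z \<in> \<int>"
    by auto
  obtain \<phi> where \<phi>: "\<phi> \<in> L2R" "\<not> (AE t in lebesgue. \<phi> t = 0)" "stft_reflection_symmetric g \<phi>"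
  proof (cases "AE t in lebesgue. g (- t) = 0")
    case True
    show thesis
      by (rule that[OF indicator_unit_cube_L2R indicator_unit_cube_not_AE_zero
            stft_reflection_symmetric_vanishing_window[OF True]])
  next
    case False
    have "g \<in> borel_measurable lebesgue"
      using assms(1) by (simp add: L2R_def)
    from that[OF L2R_uminus[OF assms(1)] False stft_reflection_symmetric_reflected_window[OF this]]
    show thesis .
  qed
  show ?thesis
    using is_cone_fun_sawtooth_cone inf_dim_L2_sawtooth_cone[OF \<phi>(2) l(1)]
      sawtooth_cone_subset_N_R[OF \<phi>(1,2) l(1) periods \<phi>(3)] by blast
qed

end
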